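(* Let $U$ be a nonempty finite set, $R\subseteq U\times U$ serial and transitive, and $r$ the rank function of $M(Reg(U,R))$. Let $n$ be an integer with $1\le n\le h(U)$, and let $X,Y\in Reg(U,R)$ with $h(X)=n$ and $h(Y)=n-1$. Then for every $Z\subseteq U$ with $Y\subsetneq Z\subsetneq X$, $r(Z)=h(X)$.
   Context: $R_s(x)=\{y\in U\mid xRy\}$; $\underline{R}(X)=\{x\mid R_s(x)\subseteq X\}$, $\overline{R}(X)=\{x\mid R_s(x)\cap X\neq\emptyset\}$; $X$ is regular if $X=\underline{R}(\overline{R}(X))$, and $Reg(U,R)$ is the lattice of regular sets under inclusion, with least element $\emptyset$. $h(A)$ is the length of a maximal chain in $[\emptyset,A]$. $M(Reg(U,R))$ is the matroid on $U$ with independent sets $\{X\subseteq U\mid h(Y)\ge|X\cap Y|\ \forall Y\in Reg(U,R)\}$ and rank function $r(X)=\max\{|I|\mid I\subseteq X \text{ independent}\}$. *)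

theory Defs
  imports Main
begin

definition succ_set :: "('a \<times> 'a) set \<Rightarrow> 'a \<Rightarrow> 'a set" where
  "succ_set R x = {y. (x, y) \<in> R}"

definition lower_approx :: "'a set \<Rightarrow> ('a \<times> 'a) set \<Rightarrow> 'a set \<Rightarrow> 'a set" where
  "lower_approx U R X = {x \<in> U. succ_set R x \<subseteq> X}"

definition upper_approx :: "'a set \<Rightarrow> ('a \<times> 'a) set \<Rightarrow> 'a set \<Rightarrow> 'a set" where
  "upper_approx U R X = {x \<in> U. succ_set R x \<inter> X \<noteq> {}}"

definition serial_on :: "'a set \<Rightarrow> ('a \<times> 'a) set \<Rightarrow> bool" where
  "serial_on U R \<longleftrightarrow> (\<forall>x\<in>U. \<exists>y\<in>U. (x, y) \<in> R)"

definition Reg :: "'a set \<Rightarrow> ('a \<times> 'a) set \<Rightarrow> 'a set set" where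
  "Reg U R = {X. X \<subseteq> U \<and> X = lower_approx U R (upper_approx U R X)}"

definition reg_chain_in :: "'a set \<Rightarrow> ('a \<times> 'a) set \<Rightarrow> 'a set \<Rightarrow> 'a set set \<Rightarrow> bool" where
  "reg_chain_in U R A C \<longleftrightarrow> C \<subseteq> Reg U R \<and> (\<forall>B\<in>C. B \<subseteq> A) \<and>
     (\<forall>B1\<in>C. \<forall>B2\<in>C. B1 \<subseteq> B2 \<or> B2 \<subseteq> B1)"

definition reg_maximal_chain :: "'a set \<Rightarrow> ('a \<times> 'a) set \<Rightarrow> 'a set \<Rightarrow> 'a set set \<Rightarrow> bool" where
  "reg_maximal_chain U R A C \<longleftrightarrow> reg_chain_in U R A C \<and>
     (\<forall>D. reg_chain_in U R A D \<and> C \<subseteq> D \<longrightarrow> D = C)"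

text \<open>h(A): length (number of elements minus one) of a maximal chain in [{}, A];
  we take the greatest such length (a longest chain is always maximal).\<close>
definition height :: "'a set \<Rightarrow> ('a \<times> 'a) set \<Rightarrow> 'a set \<Rightarrow> nat" where
  "height U R A = Max {card C - 1 | C. reg_maximal_chain U R A C}"

definition reg_indep :: "'a set \<Rightarrow> ('a \<times> 'a) set \<Rightarrow> 'a set \<Rightarrow> bool" where
  "reg_indep U R X \<longleftrightarrow> X \<subseteq> U \<and> (\<forall>Y\<in>Reg U R. card (X \<inter> Y) \<le> height U R Y)"

definition reg_rank :: "'a set \<Rightarrow> ('a \<times> 'a) set \<Rightarrow> 'a set \<Rightarrow> nat" where
  "reg_rank U R X = Max {card I | I. I \<subseteq> X \<and> reg_indep U R I}"

end

theory Submission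
  imports Defs
begin

(* For a serial transitive relation R on a finite set U call t terminal if
   every successor of t sees t again; the successor set of a terminal point is a
   "final cluster".  Every point sees a terminal point, and membership in a regular set
   is decided by final clusters: x lies in a regular W iff every final cluster above x
   meets W.  Hence W \<mapsto> (final clusters meeting W) is an order isomorphism from
   Reg(U,R) onto the powerset of the set of all final clusters, with explicit inverse.
   Consequently h(W) equals the number of final clusters of W.
   For the theorem, any independent I \<subseteq> Z \<subseteq> X has |I| = |I \<inter> X| \<le> h(X).
   Conversely pick z \<in> Z - Y, a terminal point t0 above z outside Y, and one terminal
   point of Y in each final cluster of Y; together with z these n points form an
   independent subset of Z, because a regular W containing z also contains the final
   cluster of t0, which is not a cluster of Y. *)

definition terminal :: "'a set \<Rightarrow> ('a \<times> 'a) set \<Rightarrow> 'a \<Rightarrow> bool" where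
  "terminal U R t \<longleftrightarrow> t \<in> U \<and> (\<forall>y. (t, y) \<in> R \<longrightarrow> (y, t) \<in> R)"

definition final_clusters :: "'a set \<Rightarrow> ('a \<times> 'a) set \<Rightarrow> 'a set \<Rightarrow> 'a set set" where
  "final_clusters U R W = {succ_set R t | t. terminal U R t \<and> t \<in> W}"

definition reg_of_clusters :: "'a set \<Rightarrow> ('a \<times> 'a) set \<Rightarrow> 'a set set \<Rightarrow> 'a set" where
  "reg_of_clusters U R S =
     {x \<in> U. \<forall>t. terminal U R t \<and> (x, t) \<in> R \<longrightarrow> succ_set R t \<in> S}"

lemma reg_rank_eqI:
  assumes "\<And>I. I \<subseteq> Z \<Longrightarrow> reg_indep U R I \<Longrightarrow> card I \<le> k"
    and "I0 \<subseteq> Z" and "reg_indep U R I0" and "card I0 = k"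
  shows "reg_rank U R Z = k"
proof -
  let ?M = "{card I | I. I \<subseteq> Z \<and> reg_indep U R I}"
  have le: "\<And>m. m \<in> ?M \<Longrightarrow> m \<le> k" using assms(1) by blast
  have "finite ?M" using le by (meson finite_nat_set_iff_bounded_le)
  moreover have "k \<in> ?M" using assms(2-4) by blast
  ultimately show ?thesis unfolding reg_rank_def using Max_eqI le by blast
qed

context
  fixes U :: "'a set" and R :: "('a \<times> 'a) set"
  assumes fin: "finite U" and RU: "R \<subseteq> U \<times> U" and ser: "serial_on U R" and tr: "trans R"
begin

lemma succ_set_subset: "succ_set R x \<subseteq> U"
  using RU by (auto simp: succ_set_def)

lemma succ_set_trans: "(x, y) \<in> R \<Longrightarrow> succ_set R y \<subseteq> succ_set R x"
  using tr unfolding succ_set_def by (auto dest: transD)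

lemma regular_subset: "W \<in> Reg U R \<Longrightarrow> W \<subseteq> U"
  unfolding Reg_def by blast

subsection \<open>Terminal points and final clusters\<close>

lemma terminal_refl: "terminal U R t \<Longrightarrow> (t, t) \<in> R"
  using ser tr unfolding terminal_def serial_on_def by (meson transD)

lemma terminal_in_cluster: "terminal U R t \<Longrightarrow> t \<in> succ_set R t"
  using terminal_refl by (simp add: succ_set_def)

lemma terminal_succ:
  "terminal U R t \<Longrightarrow> (t, u) \<in> R \<Longrightarrow> terminal U R u \<and> succ_set R u = succ_set R t"
  using RU tr unfolding terminal_def succ_set_def by (auto dest: transD)

text \<open>Every point sees a terminal point: a successor with minimal successor set has only
  successors with the same successor set, and any of them is terminal.\<close>
lemma exists_terminal_above:
  assumes "x \<in> U" shows "\<exists>t. terminal U R t \<and> (x, t) \<in> R"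
proof -
  obtain y0 where "(x, y0) \<in> R" using ser assms unfolding serial_on_def by blast
  then obtain y where y: "(x, y) \<in> R"
    and ymin: "\<And>z. (x, z) \<in> R \<Longrightarrow> card (succ_set R y) \<le> card (succ_set R z)"
    using ex_has_least_nat[of "\<lambda>y. (x, y) \<in> R" y0 "\<lambda>y. card (succ_set R y)"] by blast
  have same: "succ_set R u = succ_set R y" if yu: "(y, u) \<in> R" for u
  proof -
    have "(x, u) \<in> R" using y yu tr by (meson transD)
    then show ?thesis
      using card_seteq[OF finite_subset[OF succ_set_subset fin] succ_set_trans[OF yu]] ymin
      by blast
  qed
  obtain t where yt: "(y, t) \<in> R" using ser y RU unfolding serial_on_def by blast
  have "terminal U R t"
    unfolding terminal_def
  proof (intro conjI allI impI)
    show "t \<in> U" using yt RU by auto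
    fix u assume tu: "(t, u) \<in> R"
    have "(y, u) \<in> R" using yt tu tr by (meson transD)
    then have "succ_set R u = succ_set R t" using same yt by simp
    moreover have "t \<in> succ_set R t" using same[OF yt] yt by (simp add: succ_set_def)
    ultimately show "(u, t) \<in> R" unfolding succ_set_def by blast
  qed
  moreover have "(x, t) \<in> R" using y yt tr by (meson transD)
  ultimately show ?thesis by blast
qed

lemma final_clusters_finite: "finite (final_clusters U R W)"
proof -
  have "final_clusters U R W \<subseteq> Pow U"
    unfolding final_clusters_def using succ_set_subset by blast
  then show ?thesis using fin by (meson finite_Pow_iff finite_subset)
qed

lemma final_clusters_mono: "V \<subseteq> W \<Longrightarrow> final_clusters U R V \<subseteq> final_clusters U R W"
  unfolding final_clusters_def by blast

subsection \<open>Regular sets are determined by final clusters\<close>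

lemma lower_upper_iff:
  "x \<in> lower_approx U R (upper_approx U R W) \<longleftrightarrow>
     x \<in> U \<and> (\<forall>t. terminal U R t \<and> (x, t) \<in> R \<longrightarrow> succ_set R t \<inter> W \<noteq> {})"
proof -
  have "x \<in> lower_approx U R (upper_approx U R W) \<longleftrightarrow>
          x \<in> U \<and> (\<forall>y. (x, y) \<in> R \<longrightarrow> succ_set R y \<inter> W \<noteq> {})"
    using succ_set_subset unfolding lower_approx_def upper_approx_def succ_set_def by blast
  moreover have "(\<forall>y. (x, y) \<in> R \<longrightarrow> succ_set R y \<inter> W \<noteq> {}) \<longleftrightarrow>
          (\<forall>t. terminal U R t \<and> (x, t) \<in> R \<longrightarrow> succ_set R t \<inter> W \<noteq> {})"
  proof (intro iffI allI impI)
    fix y assume H: "\<forall>t. terminal U R t \<and> (x, t) \<in> R \<longrightarrow> succ_set R t \<inter> W \<noteq> {}"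
      and xy: "(x, y) \<in> R"
    obtain t where t: "terminal U R t" "(y, t) \<in> R"
      using exists_terminal_above xy RU by blast
    have "(x, t) \<in> R" using xy t tr by (meson transD)
    then show "succ_set R y \<inter> W \<noteq> {}" using H t succ_set_trans[OF t(2)] by blast
  qed simp
  ultimately show ?thesis by blast
qed

lemma regular_mem_iff:
  assumes "W \<in> Reg U R" and "x \<in> U"
  shows "x \<in> W \<longleftrightarrow> (\<forall>t. terminal U R t \<and> (x, t) \<in> R \<longrightarrow> succ_set R t \<inter> W \<noteq> {})"
  using assms lower_upper_iff unfolding Reg_def by blast

lemma regular_terminal_iff:
  assumes W: "W \<in> Reg U R" and t: "terminal U R t"
  shows "t \<in> W \<longleftrightarrow> succ_set R t \<inter> W \<noteq> {}"
proof -
  have "t \<in> U" using t by (simp add: terminal_def)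
  then have "t \<in> W \<longleftrightarrow> (\<forall>s. terminal U R s \<and> (t, s) \<in> R \<longrightarrow> succ_set R s \<inter> W \<noteq> {})"
    by (rule regular_mem_iff[OF W])
  also have "\<dots> \<longleftrightarrow> succ_set R t \<inter> W \<noteq> {}"
  proof (intro iffI allI impI)
    assume "\<forall>s. terminal U R s \<and> (t, s) \<in> R \<longrightarrow> succ_set R s \<inter> W \<noteq> {}"
    then show "succ_set R t \<inter> W \<noteq> {}" using t terminal_refl[OF t] by blast
  next
    fix s assume "succ_set R t \<inter> W \<noteq> {}" and "terminal U R s \<and> (t, s) \<in> R"
    then show "succ_set R s \<inter> W \<noteq> {}" using terminal_succ[OF t] by simp
  qed
  finally show ?thesis .
qed

lemma regular_terminal_above:
  assumes W: "W \<in> Reg U R" and x: "x \<in> W" and t: "terminal U R t" and xt: "(x, t) \<in> R"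
  shows "t \<in> W"
proof -
  have "x \<in> U" using W x regular_subset by blast
  then have "succ_set R t \<inter> W \<noteq> {}" using regular_mem_iff[OF W] x t xt by blast
  then show ?thesis using regular_terminal_iff[OF W t] by blast
qed

lemma terminal_above_outside:
  assumes W: "W \<in> Reg U R" and x: "x \<in> U" "x \<notin> W"
  shows "\<exists>t. terminal U R t \<and> (x, t) \<in> R \<and> t \<notin> W"
proof -
  obtain t where "terminal U R t" "(x, t) \<in> R" "succ_set R t \<inter> W = {}"
    using regular_mem_iff[OF W x(1)] x(2) by blast
  then show ?thesis using terminal_in_cluster by blast
qed

lemma final_clusters_reflect:
  assumes V: "V \<in> Reg U R" and W: "W \<in> Reg U R"
    and sub: "final_clusters U R V \<subseteq> final_clusters U R W"
  shows "V \<subseteq> W"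
proof
  fix x assume xV: "x \<in> V"
  have xU: "x \<in> U" using V xV regular_subset by blast
  show "x \<in> W" unfolding regular_mem_iff[OF W xU]
  proof (intro allI impI)
    fix t assume t: "terminal U R t \<and> (x, t) \<in> R"
    then have "succ_set R t \<in> final_clusters U R W"
      using regular_terminal_above[OF V xV] sub unfolding final_clusters_def by blast
    then obtain t' where "terminal U R t'" "t' \<in> W" "succ_set R t = succ_set R t'"
      unfolding final_clusters_def by blast
    then show "succ_set R t \<inter> W \<noteq> {}" using terminal_in_cluster by blast
  qed
qed

lemma reg_of_clusters_terminal:
  assumes "terminal U R t" and "(t, u) \<in> R"
  shows "u \<in> reg_of_clusters U R S \<longleftrightarrow> succ_set R t \<in> S"
proof -
  have u: "terminal U R u" "succ_set R u = succ_set R t" using terminal_succ[OF assms] by auto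
  then have "u \<in> U" by (simp add: terminal_def)
  then have "u \<in> reg_of_clusters U R S \<longleftrightarrow>
      (\<forall>s. terminal U R s \<and> (u, s) \<in> R \<longrightarrow> succ_set R s \<in> S)"
    by (simp add: reg_of_clusters_def)
  also have "\<dots> \<longleftrightarrow> succ_set R t \<in> S"
  proof (intro iffI allI impI)
    assume "\<forall>s. terminal U R s \<and> (u, s) \<in> R \<longrightarrow> succ_set R s \<in> S"
    then show "succ_set R t \<in> S" using u terminal_refl[OF u(1)] by metis
  next
    fix s assume "succ_set R t \<in> S" and "terminal U R s \<and> (u, s) \<in> R"
    then show "succ_set R s \<in> S" using terminal_succ[OF u(1)] u(2) by simp
  qed
  finally show ?thesis .
qed

lemma reg_of_clusters_regular: "reg_of_clusters U R S \<in> Reg U R"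
proof -
  let ?G = "reg_of_clusters U R S"
  have meet: "succ_set R t \<inter> ?G \<noteq> {} \<longleftrightarrow> succ_set R t \<in> S" if "terminal U R t" for t
    using reg_of_clusters_terminal[OF that] terminal_in_cluster[OF that]
    unfolding succ_set_def by blast
  have "x \<in> lower_approx U R (upper_approx U R ?G) \<longleftrightarrow> x \<in> ?G" for x
  proof -
    have "x \<in> lower_approx U R (upper_approx U R ?G) \<longleftrightarrow>
        x \<in> U \<and> (\<forall>t. terminal U R t \<and> (x, t) \<in> R \<longrightarrow> succ_set R t \<in> S)"
      unfolding lower_upper_iff using meet by blast
    then show ?thesis by (simp add: reg_of_clusters_def)
  qed
  then show ?thesis unfolding Reg_def reg_of_clusters_def by auto
qed

lemma final_clusters_reg_of_clusters:
  assumes S: "S \<subseteq> final_clusters U R U"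
  shows "final_clusters U R (reg_of_clusters U R S) = S"
proof
  show "final_clusters U R (reg_of_clusters U R S) \<subseteq> S"
    unfolding final_clusters_def using reg_of_clusters_terminal terminal_refl by blast
  show "S \<subseteq> final_clusters U R (reg_of_clusters U R S)"
  proof
    fix K assume K: "K \<in> S"
    then obtain t where t: "terminal U R t" "K = succ_set R t"
      using S unfolding final_clusters_def by blast
    then have "t \<in> reg_of_clusters U R S"
      using reg_of_clusters_terminal[OF t(1) terminal_refl[OF t(1)]] K by blast
    then show "K \<in> final_clusters U R (reg_of_clusters U R S)"
      using t unfolding final_clusters_def by blast
  qed
qed

subsection \<open>The height of a regular set is its number of final clusters\<close>

text \<open>Along a chain of regular sets the number of final clusters is injective, so a chain
  below W has at most |final clusters of W| + 1 members.\<close>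
lemma chain_card_le:
  assumes W: "W \<in> Reg U R" and C: "reg_chain_in U R W C"
  shows "finite C \<and> card C \<le> card (final_clusters U R W) + 1"
proof -
  have CR: "C \<subseteq> Reg U R" and CW: "\<And>V. V \<in> C \<Longrightarrow> V \<subseteq> W"
    and ch: "\<And>V1 V2. V1 \<in> C \<Longrightarrow> V2 \<in> C \<Longrightarrow> V1 \<subseteq> V2 \<or> V2 \<subseteq> V1"
    using C unfolding reg_chain_in_def by blast+
  have "C \<subseteq> Pow U" using CR regular_subset by blast
  then have fC: "finite C" using fin by (meson finite_Pow_iff finite_subset)
  define f where "f V = card (final_clusters U R V)" for V
  have eq: "A = B" if "A \<in> C" "B \<in> C" "A \<subseteq> B" "f A = f B" for A B
  proof -
    have "final_clusters U R A = final_clusters U R B"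
      using card_seteq[OF final_clusters_finite final_clusters_mono[OF that(3)]] that(4)
      unfolding f_def by simp
    then show ?thesis using final_clusters_reflect that CR by blast
  qed
  have inj: "inj_on f C"
    by (rule inj_onI) (metis ch eq)
  have "f ` C \<subseteq> {0..card (final_clusters U R W)}"
    using CW final_clusters_mono card_mono[OF final_clusters_finite]
    unfolding f_def by fastforce
  then have "card (f ` C) \<le> card (final_clusters U R W) + 1"
    using card_mono[of "{0..card (final_clusters U R W)}"] by fastforce
  with card_image[OF inj] fC show ?thesis by simp
qed

text \<open>Adding the final clusters of W one at a time yields a chain attaining the bound.\<close>
lemma chain_exists:
  assumes W: "W \<in> Reg U R"
  shows "\<exists>C. reg_chain_in U R W C \<and> card C = card (final_clusters U R W) + 1"
proof -
  obtain L where L: "set L = final_clusters U R W" "distinct L"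
    using finite_distinct_list[OF final_clusters_finite] by blast
  define g where "g i = reg_of_clusters U R (set (take i L))" for i
  have clusters_g: "final_clusters U R (g i) = set (take i L)" for i
    unfolding g_def using L final_clusters_mono[OF regular_subset[OF W]] set_take_subset
    by (metis final_clusters_reg_of_clusters subset_trans)
  have g_mono: "i \<le> j \<Longrightarrow> g i \<subseteq> g j" for i j
    using final_clusters_reflect reg_of_clusters_regular clusters_g set_take_subset_set_take
    unfolding g_def by metis
  have g_sub: "g i \<subseteq> W" for i
    using final_clusters_reflect[OF _ W] reg_of_clusters_regular clusters_g L(1)
      set_take_subset unfolding g_def by metis
  have inj: "inj_on g {0..length L}"
  proof (rule inj_onI)
    fix i j assume ij: "i \<in> {0..length L}" "j \<in> {0..length L}" "g i = g j"
    then have "card (set (take i L)) = card (set (take j L))" using clusters_g by metis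
    then show "i = j" using ij L(2) by (simp add: distinct_card)
  qed
  have "reg_chain_in U R W (g ` {0..length L})"
    unfolding reg_chain_in_def
  proof (intro conjI ballI)
    show "g ` {0..length L} \<subseteq> Reg U R" unfolding g_def using reg_of_clusters_regular by blast
    show "B \<subseteq> W" if "B \<in> g ` {0..length L}" for B using that g_sub by blast
    show "B1 \<subseteq> B2 \<or> B2 \<subseteq> B1" if "B1 \<in> g ` {0..length L}" "B2 \<in> g ` {0..length L}"
      for B1 B2 using that g_mono nat_le_linear by blast
  qed
  moreover have "card (g ` {0..length L}) = card (final_clusters U R W) + 1"
    using card_image[OF inj] distinct_card[OF L(2)] L(1) by simp
  ultimately show ?thesis by blast
qed

lemma height_eq_card_final_clusters:
  assumes W: "W \<in> Reg U R"
  shows "height U R W = card (final_clusters U R W)"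
proof -
  let ?k = "card (final_clusters U R W)"
  let ?M = "{card C - 1 | C. reg_maximal_chain U R W C}"
  have le: "\<And>m. m \<in> ?M \<Longrightarrow> m \<le> ?k"
    using chain_card_le[OF W] unfolding reg_maximal_chain_def by fastforce
  have finM: "finite ?M" using le by (meson finite_nat_set_iff_bounded_le)
  obtain C0 where C0: "reg_chain_in U R W C0" "card C0 = ?k + 1"
    using chain_exists[OF W] by blast
  have "reg_maximal_chain U R W C0"
    unfolding reg_maximal_chain_def
    using C0 chain_card_le[OF W] card_seteq by (metis (no_types, lifting))
  then have "?k \<in> ?M" using C0(2) by force
  then show ?thesis unfolding height_def using Max_eqI[OF finM le] by blast
qed

subsection \<open>Independent sets\<close>

lemma indep_card_le_height:
  assumes "W \<in> Reg U R" and "I \<subseteq> W" and "reg_indep U R I"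
  shows "card I \<le> height U R W"
proof -
  have "card (I \<inter> W) \<le> height U R W" using assms(1,3) unfolding reg_indep_def by blast
  moreover have "I \<inter> W = I" using assms(2) by blast
  ultimately show ?thesis by simp
qed

lemma cluster_transversal:
  "\<exists>T. T \<subseteq> Y \<and> (\<forall>t\<in>T. terminal U R t) \<and> bij_betw (succ_set R) T (final_clusters U R Y)"
proof -
  have "\<forall>K\<in>final_clusters U R Y. \<exists>t. terminal U R t \<and> t \<in> Y \<and> succ_set R t = K"
    unfolding final_clusters_def by blast
  from bchoice[OF this] obtain f where f: "\<forall>K\<in>final_clusters U R Y.
      terminal U R (f K) \<and> f K \<in> Y \<and> succ_set R (f K) = K"
    by blast
  let ?T = "f ` final_clusters U R Y"
  have inv: "succ_set R (f K) = K" if "K \<in> final_clusters U R Y" for K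
    using f that by blast
  have "inj_on (succ_set R) ?T"
  proof (rule inj_onI)
    fix t1 t2 assume "t1 \<in> ?T" "t2 \<in> ?T" "succ_set R t1 = succ_set R t2"
    then show "t1 = t2" using inv by (metis imageE)
  qed
  moreover have "succ_set R ` ?T = final_clusters U R Y"
  proof -
    have "succ_set R ` ?T = (\<lambda>K. succ_set R (f K)) ` final_clusters U R Y"
      by (simp add: image_image)
    also have "\<dots> = (\<lambda>K. K) ` final_clusters U R Y"
      by (rule image_cong) (simp_all add: inv)
    finally show ?thesis by simp
  qed
  ultimately have "bij_betw (succ_set R) ?T (final_clusters U R Y)"
    unfolding bij_betw_def by blast
  moreover have "?T \<subseteq> Y" and "\<forall>t\<in>?T. terminal U R t" using f by auto
  ultimately show ?thesis by blast
qed

lemma indep_extension: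
  assumes Y: "Y \<in> Reg U R" and zU: "z \<in> U" and zY: "z \<notin> Y"
  shows "\<exists>I. I \<subseteq> insert z Y \<and> card I = height U R Y + 1 \<and> reg_indep U R I"
proof -
  obtain T where T: "T \<subseteq> Y" "\<forall>t\<in>T. terminal U R t"
    and bij: "bij_betw (succ_set R) T (final_clusters U R Y)"
    using cluster_transversal by blast
  obtain t0 where t0: "terminal U R t0" "(z, t0) \<in> R" "t0 \<notin> Y"
    using terminal_above_outside[OF Y zU zY] by blast
  have new_cluster: "succ_set R t0 \<notin> final_clusters U R Y"
  proof
    assume "succ_set R t0 \<in> final_clusters U R Y"
    then obtain t where t: "terminal U R t" "t \<in> Y" "succ_set R t = succ_set R t0"
      unfolding final_clusters_def by blast
    then have "(t, t0) \<in> R" using terminal_in_cluster[OF t0(1)] unfolding succ_set_def by blast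
    then show False using regular_terminal_above[OF Y t(2) t0(1)] t0(3) by blast
  qed
  have finT: "finite T" by (simp add: bij_betw_finite[OF bij] final_clusters_finite)
  have "reg_indep U R (insert z T)"
    unfolding reg_indep_def
  proof (intro conjI ballI)
    show "insert z T \<subseteq> U" using T(1) regular_subset[OF Y] zU by blast
    fix W assume W: "W \<in> Reg U R"
    let ?A = "final_clusters U R Y \<inter> final_clusters U R W"
    have finA: "finite ?A" by (simp add: final_clusters_finite)
    have inj: "inj_on (succ_set R) (T \<inter> W)"
      using inj_on_subset[OF bij_betw_imp_inj_on[OF bij] Int_lower1] .
    have "succ_set R t \<in> ?A" if t: "t \<in> T \<inter> W" for t
    proof
      show "succ_set R t \<in> final_clusters U R Y" using t bij_betw_imp_surj_on[OF bij] by blast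
      show "succ_set R t \<in> final_clusters U R W"
        using t T(2) unfolding final_clusters_def by blast
    qed
    then have "card (succ_set R ` (T \<inter> W)) \<le> card ?A"
      by (intro card_mono[OF finA]) blast
    then have T_W: "card (T \<inter> W) \<le> card ?A" by (simp add: card_image[OF inj])
    have "card (insert z T \<inter> W) \<le> card (final_clusters U R W)"
    proof (cases "z \<in> W")
      case True
      have "insert (succ_set R t0) ?A \<subseteq> final_clusters U R W"
        using regular_terminal_above[OF W True t0(1,2)] t0(1)
        unfolding final_clusters_def by blast
      then have "card (insert (succ_set R t0) ?A) \<le> card (final_clusters U R W)"
        by (rule card_mono[OF final_clusters_finite])
      moreover have "card (insert (succ_set R t0) ?A) = card ?A + 1"
        using new_cluster finA by simp
      moreover have "card (insert z T \<inter> W) \<le> card (T \<inter> W) + 1"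
        using finT True by (simp add: card_insert_if)
      ultimately show ?thesis using T_W by linarith
    next
      case False
      then have "insert z T \<inter> W = T \<inter> W" by blast
      moreover have "card ?A \<le> card (final_clusters U R W)"
        by (rule card_mono[OF final_clusters_finite Int_lower2])
      ultimately show ?thesis using T_W by simp
    qed
    then show "card (insert z T \<inter> W) \<le> height U R W"
      using height_eq_card_final_clusters[OF W] by simp
  qed
  moreover have "card (insert z T) = height U R Y + 1"
  proof -
    have "z \<notin> T" using T(1) zY by blast
    then have "card (insert z T) = card T + 1" using finT by simp
    then show ?thesis
      using bij_betw_same_card[OF bij] height_eq_card_final_clusters[OF Y] by simp
  qed
  moreover have "insert z T \<subseteq> insert z Y" using T(1) by blast
  ultimately show ?thesis by blast
qed

end

theorem proposition8:
  fixes U :: "'a set" and R :: "('a \<times> 'a) set" and n :: nat and X Y Z :: "'a set"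
  assumes "finite U" and "U \<noteq> {}"
    and "R \<subseteq> U \<times> U" and "serial_on U R" and "trans R"
    and "1 \<le> n" and "n \<le> height U R U"
    and "X \<in> Reg U R" and "Y \<in> Reg U R"
    and "height U R X = n" and "height U R Y = n - 1"
    and "Z \<subseteq> U" and "Y \<subset> Z" and "Z \<subset> X"
  shows "reg_rank U R Z = height U R X"
proof -
  note setting = assms(1,3,4,5)
  have upper: "card I \<le> height U R X" if "I \<subseteq> Z" "reg_indep U R I" for I
    using indep_card_le_height[OF setting assms(8)] that assms(14) by blast
  obtain z where z: "z \<in> Z" "z \<notin> Y" using assms(13) by blast
  obtain I where I: "I \<subseteq> insert z Y" "card I = height U R Y + 1" "reg_indep U R I"
    using indep_extension[OF setting assms(9) _ z(2)] z(1) assms(12) by blast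
  have "I \<subseteq> Z" using I(1) z(1) assms(13) by blast
  moreover have "card I = height U R X" using I(2) assms(6,10,11) by simp
  ultimately show ?thesis using reg_rank_eqI upper I(3) by blast
qed

end
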